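(* Let $q\in\mathbb{N}_+$, let $p$ be an odd prime, $n\ge 2$, and let $\sigma\in\mathbb{Z}^{n-1}$ with all entries in $[-\frac{p-1}{2},\frac{p-1}{2}]$ such that $\|\sigma\bmod p\|_q = (p^q-1)^{1/q}$ and $\|k\sigma \bmod p\|_q > \|\sigma\bmod p\|_q$ for every integer $k\not\equiv 0,\pm1 \pmod p$. Let $\vec u = (1,\sigma)\in\mathbb{Z}^n$, $W_i = p\vec e_i$ for $1\le i\le n$, and $\mathcal{L}_+ = \operatorname{span}_{\mathbb{Z}}(W_1,\dots,W_n,\vec u)\subset\mathbb{R}^n$. Then every nonzero $\vec x\in\mathcal{L}_+$ satisfies $\|\vec x\|_q\ge p$, and the vectors of $\mathcal{L}_+$ with $\ell^q$-norm exactly $p$ are precisely $\pm W_1,\dots,\pm W_n,\pm\vec u$.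
   Context: $\|\vec x\|_q = (\sum_i|x_i|^q)^{1/q}$. For real $\alpha$, $|\alpha|_p = \min_{z\in\mathbb{Z}}|\alpha - zp|$, and $\|\vec x\bmod p\|_q = (\sum_i|x_i|_p^q)^{1/q}$. $\vec e_i$ denotes the $i$-th standard unit vector. *)

theory Defs
  imports Complex_Main "HOL-Computational_Algebra.Primes"
begin

text \<open>Vectors in Z^n are represented as integer lists of length n (index 0 .. n-1).\<close>

definition lq_norm :: "nat \<Rightarrow> int list \<Rightarrow> real" where
  "lq_norm q x = (\<Sum>i<length x. \<bar>real_of_int (x ! i)\<bar> ^ q) powr (1 / real q)"

definition abs_mod :: "int \<Rightarrow> real \<Rightarrow> real" where
  "abs_mod p \<alpha> = Inf {\<bar>\<alpha> - real_of_int (z * p)\<bar> | z. True}"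

definition lq_norm_mod :: "nat \<Rightarrow> int \<Rightarrow> int list \<Rightarrow> real" where
  "lq_norm_mod q p x = (\<Sum>i<length x. abs_mod p (real_of_int (x ! i)) ^ q) powr (1 / real q)"

text \<open>p e_i in Z^n (i is 0-based)\<close>
definition scaled_unit :: "nat \<Rightarrow> int \<Rightarrow> nat \<Rightarrow> int list" where
  "scaled_unit n p i = map (\<lambda>j. if j = i then p else 0) [0..<n]"

definition Lplus :: "nat \<Rightarrow> int \<Rightarrow> int list \<Rightarrow> int list set" where
  "Lplus n p u = {x. length x = n \<and>
     (\<exists>(c :: nat \<Rightarrow> int) (k :: int). \<forall>i<n. x ! i = c i * p + k * u ! i)}"

end

theory Submission
  imports Defs
begin

text \<open>
  Modulo \<open>p\<close> every vector of \<open>\<L>\<^sub>+\<close> is congruent to \<open>k \<vec>u\<close> for some integer \<open>k\<close>, and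
  replacing each coordinate by its distance to the nearest multiple of \<open>p\<close> does not increase
  \<open>\<parallel>\<vec>x\<parallel>\<^sub>q\<^sup>q\<close>. For \<open>k \<equiv> 0\<close> all coordinates are multiples of \<open>p\<close>, so a nonzero vector has norm
  at least \<open>p\<close>, with equality only at \<open>\<plusminus>W\<^sub>i\<close>. For \<open>k \<equiv> \<plusminus>1\<close> the coordinates of \<open>\<plusminus>\<vec>u\<close> are the
  reduced residues themselves, so \<open>\<parallel>\<vec>x\<parallel>\<^sub>q \<ge> \<parallel>\<vec>u\<parallel>\<^sub>q = p\<close> with equality only at \<open>\<plusminus>\<vec>u\<close>.
  For every other \<open>k\<close> the hypothesis on \<open>\<sigma>\<close> gives \<open>\<parallel>\<vec>x\<parallel>\<^sub>q \<ge> \<parallel>k\<vec>u mod p\<parallel>\<^sub>q > p\<close>.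
\<close>

definition abs_mod_int :: "int \<Rightarrow> int \<Rightarrow> int" where
  "abs_mod_int p a = min (a mod p) (p - a mod p)"

definition abs_pow_sum :: "nat \<Rightarrow> int list \<Rightarrow> real" where
  "abs_pow_sum q x = (\<Sum>i<length x. \<bar>real_of_int (x ! i)\<bar> ^ q)"

definition mod_pow_sum :: "nat \<Rightarrow> int \<Rightarrow> int list \<Rightarrow> real" where
  "mod_pow_sum q p x = (\<Sum>i<length x. real_of_int (abs_mod_int p (x ! i)) ^ q)"

lemma abs_mod_int_le:
  fixes p a z :: int
  assumes "p > 0"
  shows "abs_mod_int p a \<le> \<bar>a - z * p\<bar>"
proof -
  define j where "j = a div p - z"
  have a_eq: "a - z * p = a mod p + j * p"
    unfolding j_def using div_mult_mod_eq[of a p] by (simp add: algebra_simps)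
  have "0 \<le> a mod p" "a mod p < p"
    using assms by auto
  moreover have "j * p \<ge> 0 \<or> j * p \<le> - p"
    using assms by (cases "j \<ge> 0") (auto intro: mult_right_mono[of j "-1" p, simplified])
  ultimately show ?thesis
    unfolding abs_mod_int_def a_eq by linarith
qed

lemma abs_mod_int_attained:
  fixes p a :: int
  assumes "p > 0"
  shows "\<exists>z. abs_mod_int p a = \<bar>a - z * p\<bar>"
proof -
  have below: "a - (a div p) * p = a mod p" and above: "a - (a div p + 1) * p = a mod p - p"
    using div_mult_mod_eq[of a p] by (simp_all add: algebra_simps)
  have "0 \<le> a mod p" "a mod p < p"
    using assms by simp_all
  then have "abs_mod_int p a = \<bar>a - (a div p) * p\<bar> \<or> abs_mod_int p a = \<bar>a - (a div p + 1) * p\<bar>"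
    unfolding abs_mod_int_def below above by linarith
  then show ?thesis
    by blast
qed

lemma abs_mod_of_int:
  fixes p a :: int
  assumes "p > 0"
  shows "abs_mod p (real_of_int a) = real_of_int (abs_mod_int p a)"
  unfolding abs_mod_def
proof (rule cInf_eq_minimum)
  obtain z where "abs_mod_int p a = \<bar>a - z * p\<bar>"
    using abs_mod_int_attained[OF assms] by blast
  then show "real_of_int (abs_mod_int p a) \<in> {\<bar>real_of_int a - real_of_int (z * p)\<bar> | z. True}"
    by (auto intro!: exI[of _ z])
next
  fix y
  assume "y \<in> {\<bar>real_of_int a - real_of_int (z * p)\<bar> | z. True}"
  then obtain z where "y = real_of_int \<bar>a - z * p\<bar>"
    by auto
  then show "real_of_int (abs_mod_int p a) \<le> y"
    using abs_mod_int_le[OF assms, of a z] by (metis of_int_le_iff)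
qed

lemma abs_mod_int_cong: "a mod p = b mod p \<Longrightarrow> abs_mod_int p a = abs_mod_int p b"
  unfolding abs_mod_int_def by simp

lemma abs_mod_int_nonneg: "(p :: int) > 0 \<Longrightarrow> abs_mod_int p a \<ge> 0"
  unfolding abs_mod_int_def using pos_mod_bound[of p a] pos_mod_sign[of p a] by linarith

lemma abs_mod_int_le_abs: "(p :: int) > 0 \<Longrightarrow> abs_mod_int p a \<le> \<bar>a\<bar>"
  using abs_mod_int_le[of p a 0] by simp

lemma abs_mod_int_pos:
  fixes p a :: int
  assumes "p > 0" "\<not> p dvd a"
  shows "abs_mod_int p a \<ge> 1"
proof -
  have "a mod p \<noteq> 0" "0 \<le> a mod p" "a mod p < p"
    using assms by (simp_all add: dvd_eq_mod_eq_0)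
  then show ?thesis
    unfolding abs_mod_int_def by linarith
qed

lemma abs_mod_int_small:
  fixes p a :: int
  assumes "p > 0" "\<bar>a\<bar> \<le> (p - 1) div 2"
  shows "abs_mod_int p a = \<bar>a\<bar>"
proof -
  obtain z where z: "abs_mod_int p a = \<bar>a - z * p\<bar>"
    using abs_mod_int_attained[OF assms(1)] by blast
  have "\<bar>a\<bar> \<le> \<bar>a - z * p\<bar>"
  proof (cases "z = 0")
    case False
    then have "\<bar>z * p\<bar> \<ge> p"
      using assms(1) by (simp add: abs_mult)
    then show ?thesis
      using assms(2) by linarith
  qed simp
  then show ?thesis
    using z abs_mod_int_le_abs[OF assms(1), of a] by linarith
qed

lemma eq_of_cong_of_abs_eq:
  fixes p a b :: int
  assumes "p > 0" "\<bar>b\<bar> \<le> (p - 1) div 2" "a mod p = b mod p" "\<bar>a\<bar> = \<bar>b\<bar>"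
  shows "a = b"
proof (rule ccontr)
  assume "a \<noteq> b"
  moreover have "p dvd a - b"
    using assms(3) by (simp add: mod_eq_dvd_iff)
  ultimately have "p \<le> \<bar>a - b\<bar>"
    using dvd_imp_le_int[of "a - b" p] assms(1) by simp
  then show False
    using assms by linarith
qed

lemma lq_norm_eq_root: "q > 0 \<Longrightarrow> lq_norm q x = root q (abs_pow_sum q x)"
  unfolding lq_norm_def abs_pow_sum_def by (simp add: root_powr_inverse sum_nonneg)

lemma lq_norm_mod_eq_root:
  "q > 0 \<Longrightarrow> p > 0 \<Longrightarrow> lq_norm_mod q p x = root q (mod_pow_sum q p x)"
  unfolding lq_norm_mod_def mod_pow_sum_def
  by (simp add: abs_mod_of_int root_powr_inverse sum_nonneg abs_mod_int_nonneg)

lemma ge_lq_norm_iff: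
  "q > 0 \<Longrightarrow> P \<ge> 0 \<Longrightarrow> P \<le> lq_norm q x \<longleftrightarrow> P ^ q \<le> abs_pow_sum q x"
  by (metis lq_norm_eq_root real_root_le_iff real_root_power_cancel)

lemma lq_norm_eq_iff:
  "q > 0 \<Longrightarrow> P \<ge> 0 \<Longrightarrow> lq_norm q x = P \<longleftrightarrow> abs_pow_sum q x = P ^ q"
  by (metis lq_norm_eq_root real_root_eq_iff real_root_power_cancel)

lemma abs_pow_sum_Cons: "abs_pow_sum q (a # x) = \<bar>real_of_int a\<bar> ^ q + abs_pow_sum q x"
  unfolding abs_pow_sum_def by (simp only: length_Cons sum.lessThan_Suc_shift nth_Cons_0 nth_Cons_Suc)

lemma mod_pow_sum_Cons:
  "mod_pow_sum q p (a # x) = real_of_int (abs_mod_int p a) ^ q + mod_pow_sum q p x"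
  unfolding mod_pow_sum_def by (simp only: length_Cons sum.lessThan_Suc_shift nth_Cons_0 nth_Cons_Suc)

lemma abs_pow_sum_uminus [simp]: "abs_pow_sum q (map uminus x) = abs_pow_sum q x"
  unfolding abs_pow_sum_def by simp

lemma abs_pow_sum_scaled_unit:
  "q > 0 \<Longrightarrow> i < n \<Longrightarrow> abs_pow_sum q (scaled_unit n p i) = \<bar>real_of_int p\<bar> ^ q"
proof -
  assume "q > 0" "i < n"
  then have "abs_pow_sum q (scaled_unit n p i) = (\<Sum>j<n. if j = i then \<bar>real_of_int p\<bar> ^ q else 0)"
    unfolding abs_pow_sum_def scaled_unit_def by (intro sum.cong) auto
  then show ?thesis
    using \<open>i < n\<close> by simp
qed

lemma mod_pow_sum_small:
  assumes "p > 0" "\<forall>i<length x. \<bar>x ! i\<bar> \<le> (p - 1) div 2"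
  shows "mod_pow_sum q p x = abs_pow_sum q x"
  unfolding mod_pow_sum_def abs_pow_sum_def using assms by (intro sum.cong) (simp_all add: abs_mod_int_small)

lemma abs_le_of_cong_small:
  fixes p a b :: int
  assumes "p > 0" "\<bar>b\<bar> \<le> (p - 1) div 2" "a mod p = b mod p"
  shows "\<bar>b\<bar> \<le> \<bar>a\<bar>"
  using abs_mod_int_cong[OF assms(3)] abs_mod_int_small[OF assms(1,2)] abs_mod_int_le_abs[OF assms(1), of a]
  by simp

lemma mod_pow_sum_le_abs_pow_sum:
  assumes "p > 0" "length x = length v" "\<forall>i<length v. x ! i mod p = v ! i mod p"
  shows "mod_pow_sum q p v \<le> abs_pow_sum q x"
  unfolding mod_pow_sum_def abs_pow_sum_def assms(2)
proof (rule sum_mono)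
  fix i
  assume "i \<in> {..<length v}"
  then have "abs_mod_int p (v ! i) \<le> \<bar>x ! i\<bar>"
    using assms abs_mod_int_cong abs_mod_int_le_abs by (metis lessThan_iff)
  then show "real_of_int (abs_mod_int p (v ! i)) ^ q \<le> \<bar>real_of_int (x ! i)\<bar> ^ q"
    using abs_mod_int_nonneg[OF assms(1)] by (intro power_mono) (simp_all flip: of_int_abs)
qed

lemma eq_of_cong_of_abs_pow_sum_eq:
  assumes "q > 0" "p > 0" "length x = length v" "\<forall>i<length v. x ! i mod p = v ! i mod p"
    and small: "\<forall>i<length v. \<bar>v ! i\<bar> \<le> (p - 1) div 2"
    and eq: "abs_pow_sum q x = abs_pow_sum q v"
  shows "x = v"
proof (rule ccontr)
  assume "x \<noteq> v"
  then obtain j where j: "j < length v" "x ! j \<noteq> v ! j"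
    using assms(3) by (auto simp: list_eq_iff_nth_eq)
  have le: "\<bar>v ! i\<bar> \<le> \<bar>x ! i\<bar>" if "i < length v" for i
    using abs_le_of_cong_small assms(2,4) small that by blast
  have "\<bar>v ! j\<bar> \<noteq> \<bar>x ! j\<bar>"
    using eq_of_cong_of_abs_eq[of p "v ! j" "x ! j"] assms(2,4) small j by auto
  then have "\<bar>v ! j\<bar> < \<bar>x ! j\<bar>"
    using le[OF j(1)] by simp
  then have "\<bar>real_of_int (v ! j)\<bar> ^ q < \<bar>real_of_int (x ! j)\<bar> ^ q"
    using assms(1) by (intro power_strict_mono) (simp_all flip: of_int_abs)
  moreover have "\<bar>real_of_int (v ! i)\<bar> ^ q \<le> \<bar>real_of_int (x ! i)\<bar> ^ q" if "i < length v" for i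
    using le[OF that] by (intro power_mono) (simp_all flip: of_int_abs)
  ultimately have "abs_pow_sum q v < abs_pow_sum q x"
    unfolding abs_pow_sum_def assms(3) using j(1) by (intro sum_strict_mono_ex1) auto
  then show False
    using eq by simp
qed

lemma exists_nth_pow_ge_of_dvd:
  fixes p :: int
  assumes "p > 0" "\<forall>i<length x. p dvd x ! i" "x \<noteq> replicate (length x) 0"
  obtains j where "j < length x" "real_of_int p ^ q \<le> \<bar>real_of_int (x ! j)\<bar> ^ q"
proof -
  obtain j where j: "j < length x" "x ! j \<noteq> 0"
    using assms(3) by (auto simp: list_eq_iff_nth_eq)
  then have "p \<le> \<bar>x ! j\<bar>"
    using assms(2) dvd_imp_le_int[of "x ! j" p] assms(1) by simp
  then have "real_of_int p ^ q \<le> \<bar>real_of_int (x ! j)\<bar> ^ q"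
    using assms(1) by (intro power_mono) (simp_all flip: of_int_abs)
  then show ?thesis
    using that j(1) by blast
qed

lemma abs_pow_sum_ge_of_dvd:
  fixes p :: int
  assumes "p > 0" "\<forall>i<length x. p dvd x ! i" "x \<noteq> replicate (length x) 0"
  shows "real_of_int p ^ q \<le> abs_pow_sum q x"
proof -
  obtain j where j: "j < length x" "real_of_int p ^ q \<le> \<bar>real_of_int (x ! j)\<bar> ^ q"
    using exists_nth_pow_ge_of_dvd[OF assms] .
  note j(2)
  also have "\<dots> \<le> abs_pow_sum q x"
    unfolding abs_pow_sum_def using j(1) by (intro member_le_sum) auto
  finally show ?thesis .
qed

lemma abs_pow_sum_eq_of_dvd_imp_scaled_unit:
  fixes p :: int
  assumes "q > 0" "p > 0" "\<forall>i<length x. p dvd x ! i" "x \<noteq> replicate (length x) 0"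
    and eq: "abs_pow_sum q x = real_of_int p ^ q"
  shows "\<exists>j<length x. x = scaled_unit (length x) p j \<or> x = map uminus (scaled_unit (length x) p j)"
proof -
  obtain j where j: "j < length x" "real_of_int p ^ q \<le> \<bar>real_of_int (x ! j)\<bar> ^ q"
    using exists_nth_pow_ge_of_dvd[OF assms(2-4)] .
  define rest where "rest = (\<Sum>i\<in>{..<length x} - {j}. \<bar>real_of_int (x ! i)\<bar> ^ q)"
  have split: "abs_pow_sum q x = \<bar>real_of_int (x ! j)\<bar> ^ q + rest"
    unfolding abs_pow_sum_def rest_def using j(1) by (simp add: sum.remove)
  have "rest \<ge> 0"
    unfolding rest_def by (intro sum_nonneg) simp
  then have "rest = 0" and x_j_pow: "\<bar>real_of_int (x ! j)\<bar> ^ q = real_of_int p ^ q"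
    using split eq j(2) by linarith+
  then have others: "x ! i = 0" if "i < length x" "i \<noteq> j" for i
    using that assms(1) unfolding rest_def by (subst (asm) sum_nonneg_eq_0_iff) auto
  have "\<bar>real_of_int (x ! j)\<bar> = real_of_int p"
    using x_j_pow assms(1,2) by (subst (asm) power_eq_iff_eq_base) auto
  then consider "x ! j = p" | "x ! j = - p"
    by linarith
  then have "x = scaled_unit (length x) p j \<or> x = map uminus (scaled_unit (length x) p j)"
  proof cases
    case 1
    then have "x = scaled_unit (length x) p j"
      using others by (intro nth_equalityI) (simp_all add: scaled_unit_def)
    then show ?thesis ..
  next
    case 2
    then have "x = map uminus (scaled_unit (length x) p j)"
      using others by (intro nth_equalityI) (simp_all add: scaled_unit_def)
    then show ?thesis ..
  qed
  then show ?thesis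
    using j(1) by blast
qed

lemma Lplus_cong:
  assumes "x \<in> Lplus n p u"
  obtains k where "length x = n" "\<forall>i<n. x ! i mod p = (k * u ! i) mod p"
proof -
  obtain c k where "length x = n" "\<forall>i<n. x ! i = c i * p + k * u ! i"
    using assms unfolding Lplus_def by blast
  then show ?thesis
    using that[of k] by simp
qed

lemma scaled_unit_in_Lplus: "i < n \<Longrightarrow> scaled_unit n p i \<in> Lplus n p u"
  unfolding Lplus_def scaled_unit_def
  by (auto intro!: exI[of _ "\<lambda>j. if j = i then 1 else 0"] exI[of _ 0])

lemma uminus_scaled_unit_in_Lplus: "i < n \<Longrightarrow> map uminus (scaled_unit n p i) \<in> Lplus n p u"
  unfolding Lplus_def scaled_unit_def
  by (auto intro!: exI[of _ "\<lambda>j. if j = i then -1 else 0"] exI[of _ 0])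

lemma generator_in_Lplus: "length u = n \<Longrightarrow> u \<in> Lplus n p u"
  unfolding Lplus_def by (auto intro!: exI[of _ "\<lambda>_. 0"] exI[of _ 1])

lemma uminus_generator_in_Lplus: "length u = n \<Longrightarrow> map uminus u \<in> Lplus n p u"
  unfolding Lplus_def by (auto intro!: exI[of _ "\<lambda>_. 0"] exI[of _ "-1"])

context
  fixes q n :: nat and p :: int and u :: "int list"
  assumes q_pos: "q > 0" and p_pos: "p > 0" and length_u: "length u = n"
    and u_small: "\<forall>i<n. \<bar>u ! i\<bar> \<le> (p - 1) div 2"
    and u_norm: "abs_pow_sum q u = real_of_int p ^ q"
    and other_multiples_long:
      "\<forall>k. k mod p \<noteq> 0 \<and> k mod p \<noteq> 1 \<and> k mod p \<noteq> (-1) mod p \<longrightarrow>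
         real_of_int p ^ q < mod_pow_sum q p (map (\<lambda>s. k * s) u)"
begin

lemma signed_generator:
  assumes "v \<in> {u, map uminus u}"
  shows "length v = n" "\<forall>i<n. \<bar>v ! i\<bar> \<le> (p - 1) div 2" "abs_pow_sum q v = real_of_int p ^ q"
  using assms length_u u_small u_norm by auto

lemma Lplus_cases:
  assumes "x \<in> Lplus n p u"
  obtains "length x = n" "\<forall>i<n. p dvd x ! i"
  | v where "v \<in> {u, map uminus u}" "length x = n" "\<forall>i<n. x ! i mod p = v ! i mod p"
  | "real_of_int p ^ q < abs_pow_sum q x"
proof -
  obtain k where len: "length x = n" and x_cong: "\<forall>i<n. x ! i mod p = (k * u ! i) mod p"
    using Lplus_cong[OF assms] .
  have x_cong': "x ! i mod p = ((k mod p) * u ! i) mod p" if "i < n" for i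
    using x_cong that by (simp add: mod_mult_left_eq)
  consider "k mod p = 0" | "k mod p = 1" | "k mod p = (-1) mod p"
    | "k mod p \<noteq> 0 \<and> k mod p \<noteq> 1 \<and> k mod p \<noteq> (-1) mod p"
    by blast
  then show ?thesis
  proof cases
    case 1
    then show ?thesis
      using that(1) len x_cong' by (simp add: dvd_eq_mod_eq_0)
  next
    case 2
    then show ?thesis
      using that(2)[of u] len x_cong' by simp
  next
    case 3
    then have "x ! i mod p = map uminus u ! i mod p" if "i < n" for i
      using x_cong'[OF that] that length_u mod_mult_left_eq[of "-1" p "u ! i"] by simp
    then show ?thesis
      using that(2)[of "map uminus u"] len by blast
  next
    case 4
    have "real_of_int p ^ q < mod_pow_sum q p (map (\<lambda>s. k * s) u)"
      using 4 other_multiples_long by blast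
    also have "\<dots> \<le> abs_pow_sum q x"
      using x_cong len length_u p_pos by (intro mod_pow_sum_le_abs_pow_sum) auto
    finally show ?thesis
      using that(3) by blast
  qed
qed

lemma Lplus_abs_pow_sum_ge:
  assumes "x \<in> Lplus n p u" "x \<noteq> replicate n 0"
  shows "real_of_int p ^ q \<le> abs_pow_sum q x"
  using assms(1)
proof (cases rule: Lplus_cases)
  case 1
  then show ?thesis
    using abs_pow_sum_ge_of_dvd[OF p_pos] assms(2) by simp
next
  case (2 v)
  note v = signed_generator[OF 2(1)]
  have "real_of_int p ^ q = mod_pow_sum q p v"
    using v p_pos by (simp add: mod_pow_sum_small)
  also have "\<dots> \<le> abs_pow_sum q x"
    using 2 v p_pos by (intro mod_pow_sum_le_abs_pow_sum) auto
  finally show ?thesis .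
qed simp

lemma Lplus_abs_pow_sum_eq:
  assumes "x \<in> Lplus n p u" "abs_pow_sum q x = real_of_int p ^ q"
  shows "x \<in> {scaled_unit n p i | i. i < n} \<union> {map uminus (scaled_unit n p i) | i. i < n}
    \<union> {u, map uminus u}"
  using assms(1)
proof (cases rule: Lplus_cases)
  case 1
  have "x \<noteq> replicate n 0"
    using assms(2) p_pos q_pos by (auto simp: abs_pow_sum_def zero_power)
  then show ?thesis
    using abs_pow_sum_eq_of_dvd_imp_scaled_unit[OF q_pos p_pos _ _ assms(2)] 1 by auto
next
  case (2 v)
  note v = signed_generator[OF 2(1)]
  have "x = v"
    using 2 v q_pos p_pos assms(2) by (intro eq_of_cong_of_abs_pow_sum_eq) auto
  then show ?thesis
    using 2(1) by blast
qed (use assms(2) in simp)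

lemma Lplus_minimal_vectors:
  "{x \<in> Lplus n p u. abs_pow_sum q x = real_of_int p ^ q}
    = {scaled_unit n p i | i. i < n} \<union> {map uminus (scaled_unit n p i) | i. i < n}
      \<union> {u, map uminus u}"
  (is "?minimal = ?listed")
proof
  show "?minimal \<subseteq> ?listed"
    using Lplus_abs_pow_sum_eq by blast
  show "?listed \<subseteq> ?minimal"
    using p_pos q_pos length_u u_norm abs_pow_sum_scaled_unit scaled_unit_in_Lplus
      uminus_scaled_unit_in_Lplus generator_in_Lplus uminus_generator_in_Lplus
    by auto
qed

end

lemma mod_pow_sum_eq_of_lq_norm_mod_eq:
  "q > 0 \<Longrightarrow> p > 0 \<Longrightarrow> B \<ge> 0 \<Longrightarrow> lq_norm_mod q p x = B powr (1 / real q) \<Longrightarrow>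
    mod_pow_sum q p x = B"
  by (simp add: lq_norm_mod_eq_root flip: root_powr_inverse)

lemma Cons_one_multiples_long:
  fixes p :: int
  assumes "q > 0" "p > 0" "mod_pow_sum q p \<sigma> = real_of_int p ^ q - 1"
    and "\<forall>k::int. k mod p \<noteq> 0 \<and> k mod p \<noteq> 1 \<and> k mod p \<noteq> (-1) mod p \<longrightarrow>
           lq_norm_mod q p (map (\<lambda>s. k * s) \<sigma>) > lq_norm_mod q p \<sigma>"
  shows "\<forall>k. k mod p \<noteq> 0 \<and> k mod p \<noteq> 1 \<and> k mod p \<noteq> (-1) mod p \<longrightarrow>
           real_of_int p ^ q < mod_pow_sum q p (map (\<lambda>s. k * s) (1 # \<sigma>))"
proof (intro allI impI)
  fix k :: int
  assume k: "k mod p \<noteq> 0 \<and> k mod p \<noteq> 1 \<and> k mod p \<noteq> (-1) mod p"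
  then have "real_of_int p ^ q - 1 < mod_pow_sum q p (map (\<lambda>s. k * s) \<sigma>)"
    using assms by (simp add: lq_norm_mod_eq_root)
  moreover have "1 \<le> real_of_int (abs_mod_int p k) ^ q"
    using abs_mod_int_pos[OF assms(2), of k] k by (simp add: dvd_eq_mod_eq_0)
  ultimately show "real_of_int p ^ q < mod_pow_sum q p (map (\<lambda>s. k * s) (1 # \<sigma>))"
    by (simp add: mod_pow_sum_Cons)
qed

theorem lemma4p4:
  fixes q n :: nat and p :: int and \<sigma> :: "int list"
  assumes "q \<ge> 1" and "prime p" and "odd p" and "n \<ge> 2"
    and "length \<sigma> = n - 1"
    and "\<forall>i<n - 1. - ((p - 1) div 2) \<le> \<sigma> ! i \<and> \<sigma> ! i \<le> (p - 1) div 2"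
    and "lq_norm_mod q p \<sigma> = (real_of_int p ^ q - 1) powr (1 / real q)"
    and "\<forall>k::int. k mod p \<noteq> 0 \<and> k mod p \<noteq> 1 \<and> k mod p \<noteq> (-1) mod p \<longrightarrow>
           lq_norm_mod q p (map (\<lambda>s. k * s) \<sigma>) > lq_norm_mod q p \<sigma>"
  shows "(\<forall>x\<in>Lplus n p (1 # \<sigma>). x \<noteq> replicate n 0 \<longrightarrow> lq_norm q x \<ge> real_of_int p)
       \<and> {x \<in> Lplus n p (1 # \<sigma>). lq_norm q x = real_of_int p}
         = {scaled_unit n p i | i. i < n} \<union> {map uminus (scaled_unit n p i) | i. i < n}
           \<union> {1 # \<sigma>, map uminus (1 # \<sigma>)}"
proof -
  have q_pos: "q > 0" and p_pos: "p > 0" and p3: "p \<ge> 3"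
    using assms(1-3) prime_ge_2_int[of p] by (auto simp: le_less)
  have length_u: "length (1 # \<sigma>) = n"
    using assms(4,5) by simp
  have \<sigma>_small: "\<forall>i<length \<sigma>. \<bar>\<sigma> ! i\<bar> \<le> (p - 1) div 2"
    using assms(5,6) by (auto simp: abs_le_iff)
  have u_small: "\<forall>i<n. \<bar>(1 # \<sigma>) ! i\<bar> \<le> (p - 1) div 2"
    using \<sigma>_small p3 length_u by (auto simp: nth_Cons')
  have \<sigma>_mod_pow_sum: "mod_pow_sum q p \<sigma> = real_of_int p ^ q - 1"
    using mod_pow_sum_eq_of_lq_norm_mod_eq[OF q_pos p_pos _ assms(7)] p_pos by simp
  have u_norm: "abs_pow_sum q (1 # \<sigma>) = real_of_int p ^ q"
    using \<sigma>_mod_pow_sum \<sigma>_small p_pos by (simp add: abs_pow_sum_Cons mod_pow_sum_small)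
  note other_multiples_long = Cons_one_multiples_long[OF q_pos p_pos \<sigma>_mod_pow_sum assms(8)]
  note minimal = Lplus_abs_pow_sum_ge[OF q_pos p_pos length_u u_small u_norm other_multiples_long]
    Lplus_minimal_vectors[OF q_pos p_pos length_u u_small u_norm other_multiples_long]
  have "\<forall>x\<in>Lplus n p (1 # \<sigma>). x \<noteq> replicate n 0 \<longrightarrow> lq_norm q x \<ge> real_of_int p"
    using minimal(1) q_pos p_pos by (simp add: ge_lq_norm_iff)
  moreover have "{x \<in> Lplus n p (1 # \<sigma>). lq_norm q x = real_of_int p}
      = {x \<in> Lplus n p (1 # \<sigma>). abs_pow_sum q x = real_of_int p ^ q}"
    using q_pos p_pos by (simp add: lq_norm_eq_iff)
  ultimately show ?thesis
    using minimal(2) by simp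
qed

end
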